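(* Let $\mathbb{K}$ be a field with $\operatorname{char}(\mathbb{K})\neq 2$, let $d\geq 2$ and $\mathcal{R}=M_d(\mathbb{K})$, the ring of $d\times d$ matrices over $\mathbb{K}$, and let $f(\chi_1,\ldots,\chi_n)$ be a multilinear polynomial over $\mathbb{K}$ which is not central-valued on $\mathcal{R}$. Let $a_1,\ldots,a_6\in\mathcal{R}$ be such that $$a_1f(\zeta)^2+a_2f(\zeta)a_3f(\zeta)+f(\zeta)a_5f(\zeta)a_6+f(\zeta)a_4f(\zeta)-a_5f(\zeta)^2a_6=0$$ for all $\zeta=(\zeta_1,\ldots,\zeta_n)\in\mathcal{R}^n$. Then one of the following holds: (1) $a_2,a_5\in\mathbb{K}\cdot I_d$; (2) $a_2,a_6\in\mathbb{K}\cdot I_d$; (3) $a_3,a_5\in\mathbb{K}\cdot I_d$; (4) $a_3,a_6\in\mathbb{K}\cdot I_d$.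
   Context: A multilinear polynomial over $\mathbb{K}$ is a noncommutative polynomial in which each variable appears exactly once in every monomial; it is non-central if not all its values on $\mathcal{R}$ are scalar matrices. $I_d$ is the identity matrix. (The paper writes $a_i\in\mathcal{U}$, the Utumi quotient ring, which for $M_d(\mathbb{K})$ coincides with $M_d(\mathbb{K})$.) *)

theory Defs
  imports "HOL-Analysis.Analysis" "HOL-Combinatorics.Permutations"
begin

text \<open>A multilinear noncommutative polynomial f(x_0,...,x_{n-1}) over the field 'a is
  f = sum over permutations s of {0..<n} of c(s) * x_{s 0} x_{s 1} ... x_{s (n-1)}.
  It is represented by its coefficient function c on permutations.\<close>

definition ordered_prod :: "nat \<Rightarrow> (nat \<Rightarrow> nat) \<Rightarrow> (nat \<Rightarrow> 'a::field^'d^'d) \<Rightarrow> 'a^'d^'d" where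
  "ordered_prod n s \<zeta> = foldr (**) (map (\<lambda>i. \<zeta> (s i)) [0..<n]) (mat 1)"

definition mlpoly_eval :: "nat \<Rightarrow> ((nat \<Rightarrow> nat) \<Rightarrow> 'a::field) \<Rightarrow> (nat \<Rightarrow> 'a^'d^'d) \<Rightarrow> 'a^'d^'d" where
  "mlpoly_eval n c \<zeta> = (\<Sum>s\<in>{s. s permutes {0..<n}}. mat (c s) ** ordered_prod n s \<zeta>)"

definition scalar_matrix :: "'a::field^'d^'d \<Rightarrow> bool" where
  "scalar_matrix A \<longleftrightarrow> (\<exists>k. A = mat k)"

definition central_valued :: "nat \<Rightarrow> ((nat \<Rightarrow> nat) \<Rightarrow> 'a::field) \<Rightarrow> 'd::finite itself \<Rightarrow> bool" where
  "central_valued n c _ \<longleftrightarrow> (\<forall>\<zeta> :: nat \<Rightarrow> 'a^'d^'d. scalar_matrix (mlpoly_eval n c \<zeta>))"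

end

theory Submission
  imports Defs
begin

text \<open>Let \<open>Q(F)\<close> be the left-hand side of the identity and \<open>B\<close> its polarization, so that
  \<open>Q(F + G) = Q(F) + Q(G) + B(F, G)\<close>. Because \<open>f\<close> is multilinear and the inner derivation
  \<open>X \<mapsto> A X - X A\<close> acts on a value \<open>f(\<zeta>)\<close> as the sum of its actions on the variables,
  \<open>Q \<circ> f = 0\<close> also gives \<open>B(N, A N - N A) = 0\<close> for every value \<open>N\<close> of \<open>f\<close>.
  A non-central multilinear polynomial has a nonzero multiple of a matrix unit \<open>E\<^sub>x\<^sub>y\<close>,
  \<open>x \<noteq> y\<close>, among its values, and the values are closed under conjugation; hence both identities
  hold for every square-zero rank-one matrix \<open>u v\<^sup>T\<close>. Applied to suitable vectors they yield two
  bilinear conditions on the pair \<open>(a\<^sub>2, a\<^sub>3)\<close>, and the same conditions on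
  \<open>(a\<^sub>6\<^sup>T, a\<^sub>5\<^sup>T)\<close>. These force one matrix of the pair to be scalar: if \<open>u\<close> is not an
  eigenvector of one of them, the other is a scalar plus a rank-one matrix with image \<open>u\<close>; two
  such decompositions produce a vector that is an eigenvector of neither matrix, which the first
  condition forbids.\<close>

section \<open>Matrix arithmetic\<close>

definition matrix_scale :: "'a::times \<Rightarrow> 'a^'n^'m \<Rightarrow> 'a^'n^'m" where
  "matrix_scale k A = (\<chi> i j. k * A$i$j)"

lemma matrix_scale_nth [simp]: "matrix_scale k A $ i $ j = k * A $ i $ j"
  by (simp add: matrix_scale_def)

lemma matrix_scale_one [simp]: "matrix_scale 1 (A::'a::monoid_mult^'n^'m) = A"
  by (simp add: vec_eq_iff)

lemma matrix_scale_zero [simp]: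
  "matrix_scale 0 (A::'a::mult_zero^'n^'m) = 0" "matrix_scale k (0::'a::mult_zero^'n^'m) = 0"
  by (simp_all add: vec_eq_iff)

lemma matrix_scale_eq_0_iff [simp]:
  "matrix_scale k (A::'a::field^'n^'m) = 0 \<longleftrightarrow> k = 0 \<or> A = 0"
  by (auto simp: vec_eq_iff)

lemma matrix_scale_scale:
  "matrix_scale k (matrix_scale l (A::'a::semigroup_mult^'n^'m)) = matrix_scale (k * l) A"
  by (simp add: vec_eq_iff mult.assoc)

lemma matrix_scale_add:
  "matrix_scale k ((A::'a::semiring^'n^'m) + B) = matrix_scale k A + matrix_scale k B"
  by (simp add: vec_eq_iff distrib_left)

lemma matrix_scale_diff:
  "matrix_scale k ((A::'a::ring^'n^'m) - B) = matrix_scale k A - matrix_scale k B"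
  by (simp add: vec_eq_iff right_diff_distrib)

lemma matrix_scale_sum:
  "matrix_scale k (sum f S) = (\<Sum>x\<in>S. matrix_scale k (f x :: 'a::semiring_0^'n^'m))"
  by (induction S rule: infinite_finite_induct) (auto simp: matrix_scale_add)

lemma mat_mult_left: "mat k ** (A::'a::semiring_1^'n^'m) = matrix_scale k A"
  by (simp add: vec_eq_iff matrix_matrix_mult_def mat_def if_distrib if_distribR sum.delta'
      cong: if_cong)

lemma matrix_scale_mult_left:
  "matrix_scale k (A::'a::semiring_1^'n^'m) ** B = matrix_scale k (A ** B)"
  by (vector matrix_matrix_mult_def sum_distrib_left mult.assoc matrix_scale_def)

lemma matrix_scale_mult_right:
  "(A::'a::comm_semiring_1^'n^'m) ** matrix_scale k B = matrix_scale k (A ** B)"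
  by (vector matrix_matrix_mult_def sum_distrib_left mult_ac matrix_scale_def)

lemma matrix_add_rdistrib: "((A::'a::semiring_1^'n^'m) + B) ** C = A ** C + B ** C"
  by (vector matrix_matrix_mult_def sum.distrib[symmetric] distrib_right)

lemma matrix_diff_ldistrib: "(A::'a::ring_1^'n^'m) ** (B - C) = A ** B - A ** C"
  by (vector matrix_matrix_mult_def sum_subtractf[symmetric] right_diff_distrib)

lemma matrix_diff_rdistrib: "((A::'a::ring_1^'n^'m) - B) ** C = A ** C - B ** C"
  by (vector matrix_matrix_mult_def sum_subtractf[symmetric] left_diff_distrib)

lemma matrix_sum_ldistrib: "(A::'a::semiring_1^'n^'m) ** sum f S = (\<Sum>x\<in>S. A ** f x)"
  by (induction S rule: infinite_finite_induct) (auto simp: matrix_add_ldistrib)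

lemma matrix_sum_rdistrib: "sum f S ** (B::'a::semiring_1^'n^'m) = (\<Sum>x\<in>S. f x ** B)"
  by (induction S rule: infinite_finite_induct) (auto simp: matrix_add_rdistrib)

lemmas matrix_distrib_simps = matrix_add_ldistrib matrix_add_rdistrib matrix_diff_ldistrib
  matrix_diff_rdistrib matrix_scale_mult_left matrix_scale_mult_right matrix_scale_scale
  matrix_scale_add matrix_scale_diff

section \<open>Evaluating multilinear polynomials\<close>

definition mat_list_prod :: "('a::semiring_1^'d^'d) list \<Rightarrow> 'a^'d^'d" where
  "mat_list_prod xs = foldr (**) xs (mat 1)"

lemma mat_list_prod_simps [simp]:
  "mat_list_prod [] = mat 1" "mat_list_prod (x # xs) = x ** mat_list_prod xs"
  by (simp_all add: mat_list_prod_def)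

lemma mat_list_prod_append: "mat_list_prod (xs @ ys) = mat_list_prod xs ** mat_list_prod ys"
  by (induction xs) (auto simp: matrix_mul_assoc)

lemma mat_list_prod_update:
  "i < length xs \<Longrightarrow>
    mat_list_prod (xs[i := X]) = mat_list_prod (take i xs) ** X ** mat_list_prod (drop (Suc i) xs)"
  by (simp add: upd_conv_take_nth_drop mat_list_prod_append matrix_mul_assoc)

lemma mat_list_prod_commutator:
  "(\<Sum>i<length xs.
      mat_list_prod (take i xs) ** (A ** xs!i - xs!i ** A) ** mat_list_prod (drop (Suc i) xs))
     = A ** mat_list_prod xs - mat_list_prod xs ** (A::'a::ring_1^'d^'d)"
proof (induction xs)
  case Nil
  then show ?case by simp
next
  case (Cons x xs)
  have "(\<Sum>i<length (x # xs). mat_list_prod (take i (x # xs)) ** (A ** (x # xs)!i - (x # xs)!i ** A)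
          ** mat_list_prod (drop (Suc i) (x # xs)))
     = (A ** x - x ** A) ** mat_list_prod xs + x ** (\<Sum>i<length xs.
          mat_list_prod (take i xs) ** (A ** xs!i - xs!i ** A) ** mat_list_prod (drop (Suc i) xs))"
    by (simp add: sum.lessThan_Suc_shift matrix_mul_assoc matrix_sum_ldistrib del: sum.lessThan_Suc)
  also have "\<dots> = A ** mat_list_prod (x # xs) - mat_list_prod (x # xs) ** A"
    unfolding Cons.IH by (simp add: matrix_diff_ldistrib matrix_diff_rdistrib matrix_mul_assoc)
  finally show ?case .
qed

lemma mat_list_prod_conj:
  assumes "P ** P' = mat 1" "P' ** P = mat 1"
  shows "mat_list_prod (map (\<lambda>X. P ** X ** P') xs) =
    P ** mat_list_prod xs ** (P'::'a::semiring_1^'d^'d)"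
proof (induction xs)
  case Nil
  then show ?case using assms(1) by simp
next
  case (Cons x xs)
  have "P ** x ** P' ** (P ** mat_list_prod xs ** P') = P ** x ** (P' ** P) ** mat_list_prod xs ** P'"
    by (simp add: matrix_mul_assoc)
  then show ?case using Cons assms(2) by (simp add: matrix_mul_assoc)
qed

definition perm_factors :: "nat \<Rightarrow> (nat \<Rightarrow> nat) \<Rightarrow> (nat \<Rightarrow> 'b) \<Rightarrow> 'b list" where
  "perm_factors n s \<zeta> = map (\<lambda>i. \<zeta> (s i)) [0..<n]"

lemma ordered_prod_eq: "ordered_prod n s \<zeta> = mat_list_prod (perm_factors n s \<zeta>)"
  by (simp add: ordered_prod_def mat_list_prod_def perm_factors_def)

lemma perm_factors_update:
  assumes s: "s permutes {0..<n}" and i: "i < n"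
  shows "perm_factors n s (\<zeta>(s i := X)) = (perm_factors n s \<zeta>)[i := X]"
proof (rule nth_equalityI)
  fix j assume "j < length (perm_factors n s (\<zeta>(s i := X)))"
  then have j: "j < n" by (simp add: perm_factors_def)
  have "s j = s i \<longleftrightarrow> j = i"
    using permutes_inj_on[OF s, of "{0..<n}"] i j by (auto dest: inj_onD)
  then show "perm_factors n s (\<zeta>(s i := X)) ! j = (perm_factors n s \<zeta>)[i := X] ! j"
    using i j by (auto simp: perm_factors_def nth_list_update)
qed (simp add: perm_factors_def)

lemma ordered_prod_update:
  assumes "s permutes {0..<n}" "i < n"
  shows "ordered_prod n s (\<zeta>(s i := X)) =
    mat_list_prod (take i (perm_factors n s \<zeta>)) ** X **
    mat_list_prod (drop (Suc i) (perm_factors n s \<zeta>))"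
proof -
  have "i < length (perm_factors n s \<zeta>)" using assms(2) by (simp add: perm_factors_def)
  then show ?thesis by (simp add: ordered_prod_eq perm_factors_update[OF assms] mat_list_prod_update)
qed

lemma mlpoly_eval_slot:
  fixes \<zeta> :: "nat \<Rightarrow> 'a::field^'d^'d"
  assumes k: "k < n"
  obtains L R where "\<And>X. mlpoly_eval n c (\<zeta>(k := X)) =
    (\<Sum>s\<in>{s. s permutes {0..<n}}. matrix_scale (c s) (L s ** X ** R s))"
proof
  fix X
  show "mlpoly_eval n c (\<zeta>(k := X)) = (\<Sum>s\<in>{s. s permutes {0..<n}}. matrix_scale (c s)
      (mat_list_prod (take (inv s k) (perm_factors n s \<zeta>)) ** X **
       mat_list_prod (drop (Suc (inv s k)) (perm_factors n s \<zeta>))))"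
    unfolding mlpoly_eval_def
  proof (rule sum.cong)
    fix s assume "s \<in> {s. s permutes {0..<n}}"
    then have s: "s permutes {0..<n}" by simp
    have "s (inv s k) = k" using permutes_inverses(1)[OF s] .
    moreover have "inv s k < n"
      using permutes_in_image[OF permutes_inv[OF s], of k] k by simp
    ultimately show "mat (c s) ** ordered_prod n s (\<zeta>(k := X)) = matrix_scale (c s)
        (mat_list_prod (take (inv s k) (perm_factors n s \<zeta>)) ** X **
         mat_list_prod (drop (Suc (inv s k)) (perm_factors n s \<zeta>)))"
      using ordered_prod_update[OF s, of "inv s k" \<zeta> X] by (simp add: mat_mult_left)
  qed simp
qed

lemma mlpoly_eval_update_add:
  "k < n \<Longrightarrow> mlpoly_eval n c (\<zeta>(k := X + Y)) = mlpoly_eval n c (\<zeta>(k := X)) + mlpoly_eval n c (\<zeta>(k := Y))"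
  by (rule mlpoly_eval_slot[where c = c and \<zeta> = \<zeta>], assumption)
    (simp add: matrix_distrib_simps sum.distrib)

lemma mlpoly_eval_update_scale:
  "k < n \<Longrightarrow> mlpoly_eval n c (\<zeta>(k := matrix_scale a X)) = matrix_scale a (mlpoly_eval n c (\<zeta>(k := X)))"
  by (rule mlpoly_eval_slot[where c = c and \<zeta> = \<zeta>], assumption)
    (simp add: matrix_distrib_simps matrix_scale_sum mult.commute)

lemma mlpoly_eval_update_sum:
  "k < n \<Longrightarrow> mlpoly_eval n c (\<zeta>(k := sum g S)) = (\<Sum>x\<in>S. mlpoly_eval n c (\<zeta>(k := g x)))"
  by (rule mlpoly_eval_slot[where c = c and \<zeta> = \<zeta>], assumption)
    (simp add: matrix_sum_ldistrib matrix_sum_rdistrib matrix_scale_sum sum.swap[where A = S])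

lemma ordered_prod_commutator:
  assumes s: "s permutes {0..<n}"
  shows "(\<Sum>k<n. ordered_prod n s (\<zeta>(k := A ** \<zeta> k - \<zeta> k ** A)))
     = A ** ordered_prod n s \<zeta> - ordered_prod n s \<zeta> ** (A::'a::field^'d^'d)"
proof -
  let ?xs = "perm_factors n s \<zeta>"
  have "bij_betw s {..<n} {..<n}"
    using permutes_imp_bij[OF s] by (simp add: atLeast0LessThan)
  then have "(\<Sum>k<n. ordered_prod n s (\<zeta>(k := A ** \<zeta> k - \<zeta> k ** A)))
      = (\<Sum>i<n. ordered_prod n s (\<zeta>(s i := A ** \<zeta> (s i) - \<zeta> (s i) ** A)))"
    by (rule sum.reindex_bij_betw[symmetric])
  also have "\<dots> = (\<Sum>i<length ?xs. mat_list_prod (take i ?xs) ** (A ** ?xs!i - ?xs!i ** A)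
      ** mat_list_prod (drop (Suc i) ?xs))"
    by (rule sum.cong) (auto simp: ordered_prod_update[OF s] perm_factors_def)
  also have "\<dots> = A ** ordered_prod n s \<zeta> - ordered_prod n s \<zeta> ** A"
    by (simp add: mat_list_prod_commutator ordered_prod_eq)
  finally show ?thesis .
qed

lemma mlpoly_eval_commutator:
  "(\<Sum>k<n. mlpoly_eval n c (\<zeta>(k := A ** \<zeta> k - \<zeta> k ** A)))
     = A ** mlpoly_eval n c \<zeta> - mlpoly_eval n c \<zeta> ** (A::'a::field^'d^'d)"
proof -
  have "(\<Sum>k<n. mlpoly_eval n c (\<zeta>(k := A ** \<zeta> k - \<zeta> k ** A))) = (\<Sum>s | s permutes {0..<n}.
      matrix_scale (c s) (\<Sum>k<n. ordered_prod n s (\<zeta>(k := A ** \<zeta> k - \<zeta> k ** A))))"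
    unfolding mlpoly_eval_def by (simp add: mat_mult_left matrix_scale_sum sum.swap[where A = "{..<n}"])
  also have "\<dots> = (\<Sum>s | s permutes {0..<n}.
      matrix_scale (c s) (A ** ordered_prod n s \<zeta> - ordered_prod n s \<zeta> ** A))"
    by (rule sum.cong) (auto simp: ordered_prod_commutator)
  also have "\<dots> = A ** mlpoly_eval n c \<zeta> - mlpoly_eval n c \<zeta> ** A"
    unfolding mlpoly_eval_def
    by (simp add: mat_mult_left matrix_distrib_simps matrix_sum_ldistrib matrix_sum_rdistrib
        sum_subtractf)
  finally show ?thesis .
qed

lemma mlpoly_eval_conj:
  assumes "P ** P' = mat 1" "P' ** P = mat 1"
  shows "mlpoly_eval n c (\<lambda>k. P ** \<zeta> k ** P') = P ** mlpoly_eval n c \<zeta> ** (P'::'a::field^'d^'d)"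
proof -
  have "ordered_prod n s (\<lambda>k. P ** \<zeta> k ** P') = P ** ordered_prod n s \<zeta> ** P'" for s
    using mat_list_prod_conj[OF assms, of "perm_factors n s \<zeta>"]
    by (simp add: ordered_prod_eq perm_factors_def o_def)
  then show ?thesis
    unfolding mlpoly_eval_def
    by (simp add: mat_mult_left matrix_sum_ldistrib matrix_sum_rdistrib matrix_distrib_simps)
qed

lemma mlpoly_eval_cong:
  assumes "\<And>k. k < n \<Longrightarrow> \<zeta> k = \<zeta>' k"
  shows "mlpoly_eval n c \<zeta> = mlpoly_eval n c \<zeta>'"
proof -
  have "perm_factors n s \<zeta> = perm_factors n s \<zeta>'" if "s permutes {0..<n}" for s
    using assms permutes_in_image[OF that] by (simp add: perm_factors_def)
  then show ?thesis by (simp add: mlpoly_eval_def ordered_prod_eq)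
qed

lemma sum_list_perm_factors:
  assumes "s permutes {0..<n}"
  shows "sum_list (map h (perm_factors n s g)) = (\<Sum>k<n. h (g k))"
proof -
  have "sum_list (map h (perm_factors n s g)) = (\<Sum>i<n. h (g (s i)))"
    by (simp add: perm_factors_def sum_list_sum_nth atLeast0LessThan)
  also have "\<dots> = (\<Sum>k<n. h (g k))"
    using sum.reindex_bij_betw[OF permutes_imp_bij[OF assms], of "\<lambda>k. h (g k)"]
    by (simp add: atLeast0LessThan)
  finally show ?thesis .
qed

section \<open>Matrix units among the values\<close>

definition unit_mat :: "'d \<Rightarrow> 'd \<Rightarrow> 'a::zero_neq_one^'d^'d" where
  "unit_mat a b = (\<chi> r t. if r = a \<and> t = b then 1 else 0)"

lemma unit_mat_nth [simp]: "unit_mat a b $ r $ t = (if r = a \<and> t = b then 1 else 0)"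
  by (simp add: unit_mat_def)

lemma unit_mat_mult_left:
  "unit_mat a b ** (M::'a::semiring_1^'d^'d) = (\<chi> r t. if r = a then M$b$t else 0)"
  by (simp add: vec_eq_iff matrix_matrix_mult_def if_distrib if_distribR sum.delta cong: if_cong)

lemma unit_mat_mult_right:
  "(M::'a::semiring_1^'d^'d) ** unit_mat a b = (\<chi> r t. if t = b then M$r$a else 0)"
  by (simp add: vec_eq_iff matrix_matrix_mult_def if_distrib if_distribR sum.delta' cong: if_cong)

lemma unit_mat_square: "a \<noteq> b \<Longrightarrow> unit_mat a b ** unit_mat a b = (0::'a::semiring_1^'d^'d)"
  by (simp add: unit_mat_mult_left vec_eq_iff)

lemma unit_mat_expansion:
  "(X::'a::semiring_1^'d^'d) = (\<Sum>p\<in>UNIV. matrix_scale (X $ fst p $ snd p) (unit_mat (fst p) (snd p)))"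
proof -
  have "(\<Sum>p\<in>UNIV. matrix_scale (X $ fst p $ snd p) (unit_mat (fst p) (snd p))) $ r $ t = X $ r $ t"
    for r t
  proof -
    have "(\<Sum>p\<in>UNIV. matrix_scale (X $ fst p $ snd p) (unit_mat (fst p) (snd p))) $ r $ t
        = (\<Sum>p\<in>UNIV. if p = (r, t) then X $ r $ t else 0)"
      unfolding sum_component by (rule sum.cong) auto
    then show ?thesis by simp
  qed
  then show ?thesis by (simp add: vec_eq_iff)
qed

text \<open>A product of matrix units \<open>E\<^sub>a\<^sub>b\<close> is zero unless consecutive indices match, so a nonzero entry
  \<open>(r, t)\<close> is read off from the multiset of index pairs: every index \<open>v\<close> occurs as a row index
  exactly \<open>[r = v] - [t = v]\<close> times more often than as a column index. This count does not
  depend on the order of the factors, so at a tuple of matrix units all monomials of a multilinear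
  polynomial are supported on the same off-diagonal entry.\<close>

lemma mat_list_prod_units_nonzero:
  assumes "(mat_list_prod (map (\<lambda>(a, b). unit_mat a b) ps) :: 'a::semiring_1^'d^'d) $ r $ t \<noteq> 0"
  shows "(\<Sum>(a, b)\<leftarrow>ps. of_bool (a = v) - of_bool (b = v) :: int) = of_bool (r = v) - of_bool (t = v)"
  using assms
proof (induction ps arbitrary: r)
  case Nil
  then show ?case by (auto simp: mat_def split: if_splits)
next
  case (Cons p ps)
  obtain a b where p: "p = (a, b)" by fastforce
  with Cons.prems have "r = a"
    and "(mat_list_prod (map (\<lambda>(a, b). unit_mat a b) ps) :: 'a^'d^'d) $ b $ t \<noteq> 0"
    by (auto simp: unit_mat_mult_left split: if_splits)
  with Cons.IH p show ?case by simp
qed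

lemma mlpoly_eval_units:
  fixes n :: nat and a b :: "nat \<Rightarrow> 'd::finite" and c :: "(nat \<Rightarrow> nat) \<Rightarrow> 'a::field"
  defines "F \<equiv> mlpoly_eval n c (\<lambda>k. unit_mat (a k) (b k)) :: 'a^'d^'d"
  assumes ij: "i \<noteq> j" and nz: "F $ i $ j \<noteq> 0"
  shows "F = matrix_scale (F $ i $ j) (unit_mat i j)"
proof -
  define U where "U s = (ordered_prod n s (\<lambda>k. unit_mat (a k) (b k)) :: 'a^'d^'d)" for s
  have F_entry: "F $ r $ t = (\<Sum>s | s permutes {0..<n}. c s * U s $ r $ t)" for r t
    unfolding F_def U_def mlpoly_eval_def by (simp add: mat_mult_left)
  have balance:
    "(\<Sum>k<n. of_bool (a k = v) - of_bool (b k = v) :: int) = of_bool (r = v) - of_bool (t = v)"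
    if s: "s permutes {0..<n}" and "U s $ r $ t \<noteq> 0" for s r t v
  proof -
    have "U s = mat_list_prod (map (\<lambda>(a, b). unit_mat a b) (perm_factors n s (\<lambda>k. (a k, b k))))"
      by (simp add: U_def ordered_prod_eq perm_factors_def o_def)
    with that(2)
    have "(\<Sum>(a, b)\<leftarrow>perm_factors n s (\<lambda>k. (a k, b k)). of_bool (a = v) - of_bool (b = v) :: int)
        = of_bool (r = v) - of_bool (t = v)"
      by (intro mat_list_prod_units_nonzero[where 'a = 'a]) simp
    then show ?thesis by (simp add: sum_list_perm_factors[OF s])
  qed
  obtain s0 where s0: "s0 permutes {0..<n}" "U s0 $ i $ j \<noteq> 0"
    using nz unfolding F_entry
    by (metis (mono_tags, lifting) mem_Collect_eq mult_zero_right sum.neutral)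
  have "U s $ r $ t = 0" if "s permutes {0..<n}" "\<not> (r = i \<and> t = j)" for s r t
  proof (rule ccontr)
    assume "U s $ r $ t \<noteq> 0"
    then have "(of_bool (r = v) - of_bool (t = v) :: int) = of_bool (i = v) - of_bool (j = v)" for v
      using balance[OF that(1)] balance[OF s0] by metis
    from this[of i] this[of j] ij have "r = i" "t = j"
      by (cases "r = i"; cases "t = j"; auto simp: of_bool_def split: if_splits)+
    with that(2) show False by simp
  qed
  then have "F $ r $ t = 0" if "\<not> (r = i \<and> t = j)" for r t
    using that unfolding F_entry by simp
  then show ?thesis by (auto simp: vec_eq_iff)
qed

lemma mlpoly_eval_entry_unit_slot:
  fixes \<zeta> :: "nat \<Rightarrow> 'a::field^'d^'d"
  assumes k: "k < n" and nz: "mlpoly_eval n c \<zeta> $ i $ j \<noteq> 0"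
  obtains a b where "mlpoly_eval n c (\<zeta>(k := unit_mat a b)) $ i $ j \<noteq> 0"
proof -
  have "mlpoly_eval n c \<zeta> = mlpoly_eval n c (\<zeta>(k := \<zeta> k))" by simp
  also have "\<dots> = (\<Sum>p\<in>UNIV. matrix_scale (\<zeta> k $ fst p $ snd p)
      (mlpoly_eval n c (\<zeta>(k := unit_mat (fst p) (snd p)))))"
    by (subst unit_mat_expansion[of "\<zeta> k"])
      (simp add: mlpoly_eval_update_sum[OF k] mlpoly_eval_update_scale[OF k])
  finally have "(\<Sum>p\<in>UNIV. \<zeta> k $ fst p $ snd p *
      mlpoly_eval n c (\<zeta>(k := unit_mat (fst p) (snd p))) $ i $ j) \<noteq> 0"
    using nz by (simp add: sum_component)
  then obtain p where
    "\<zeta> k $ fst p $ snd p * mlpoly_eval n c (\<zeta>(k := unit_mat (fst p) (snd p))) $ i $ j \<noteq> 0"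
    by (rule sum.not_neutral_contains_not_neutral)
  then show thesis using that[of "fst p" "snd p"] by simp
qed

lemma mlpoly_eval_entry_on_units:
  fixes \<zeta> :: "nat \<Rightarrow> 'a::field^'d^'d"
  assumes "mlpoly_eval n c \<zeta> $ i $ j \<noteq> 0"
  obtains a b where "(mlpoly_eval n c (\<lambda>k. unit_mat (a k) (b k)) :: 'a^'d^'d) $ i $ j \<noteq> 0"
proof -
  have "\<exists>a b. mlpoly_eval n c (\<lambda>k. if k < m then unit_mat (a k) (b k) else \<zeta> k) $ i $ j \<noteq> 0"
    if "m \<le> n" for m
    using that
  proof (induction m)
    case 0
    then show ?case using assms by simp
  next
    case (Suc m)
    then obtain a b where nz:
      "mlpoly_eval n c (\<lambda>k. if k < m then unit_mat (a k) (b k) else \<zeta> k) $ i $ j \<noteq> 0"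
      by auto
    have "m < n" using Suc.prems by simp
    from this nz obtain a' b' where "mlpoly_eval n c
        ((\<lambda>k. if k < m then unit_mat (a k) (b k) else \<zeta> k)(m := unit_mat a' b')) $ i $ j \<noteq> 0"
      by (rule mlpoly_eval_entry_unit_slot)
    moreover have "(\<lambda>k. if k < m then unit_mat (a k) (b k) else \<zeta> k)(m := unit_mat a' b') =
        (\<lambda>k. if k < Suc m then unit_mat ((a(m := a')) k) ((b(m := b')) k) else \<zeta> k)"
      by (rule ext) (simp add: less_Suc_eq)
    ultimately show ?case by (metis (no_types))
  qed
  then obtain a b where "mlpoly_eval n c (\<lambda>k. if k < n then unit_mat (a k) (b k) else \<zeta> k) $ i $ j \<noteq> 0"
    by blast
  moreover have "mlpoly_eval n c (\<lambda>k. if k < n then unit_mat (a k) (b k) else \<zeta> k) =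
      mlpoly_eval n c (\<lambda>k. unit_mat (a k) (b k))"
    by (rule mlpoly_eval_cong) simp
  ultimately show thesis using that by simp
qed

lemma nonscalar_conj_offdiag:
  fixes F :: "'a::field^'d^'d"
  assumes "\<not> scalar_matrix F"
  obtains P P' :: "'a^'d^'d" and i j
  where "P ** P' = mat 1" "P' ** P = mat 1" "i \<noteq> j" "(P ** F ** P') $ i $ j \<noteq> 0"
proof (cases "\<exists>i j. i \<noteq> j \<and> F $ i $ j \<noteq> 0")
  case True
  then show thesis using that[of "mat 1" "mat 1"] by auto
next
  case False
  obtain u w where uw: "F $ u $ u \<noteq> F $ w $ w"
  proof (rule ccontr)
    assume "\<not> thesis"
    with that False have "F = mat (F $ undefined $ undefined)"
      by (auto simp: vec_eq_iff mat_def)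
    with assms show False unfolding scalar_matrix_def by blast
  qed
  then have "u \<noteq> w" by blast
  have off: "F $ i $ j = 0" if "i \<noteq> j" for i j using False that by blast
  define E where "E = (unit_mat u w :: 'a^'d^'d)"
  have EE: "E ** E = 0" unfolding E_def using unit_mat_square[OF \<open>u \<noteq> w\<close>] .
  have "(mat 1 + E) ** (mat 1 - E) = mat 1" "(mat 1 - E) ** (mat 1 + E) = mat 1"
    by (simp_all add: matrix_distrib_simps EE)
  moreover have "(mat 1 + E) ** F ** (mat 1 - E) = F + E ** F - F ** E - E ** F ** E"
    by (simp add: matrix_distrib_simps)
  then have "((mat 1 + E) ** F ** (mat 1 - E)) $ u $ w = F $ w $ w - F $ u $ u"
    using off \<open>u \<noteq> w\<close> by (simp add: E_def unit_mat_mult_left unit_mat_mult_right)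
  ultimately show thesis using that \<open>u \<noteq> w\<close> uw by (metis right_minus_eq)
qed

lemma noncentral_value_unit_mat:
  assumes "\<not> central_valued n c TYPE('d)"
  obtains \<zeta> x y k where "x \<noteq> y" "k \<noteq> 0"
    "(mlpoly_eval n c \<zeta> :: 'a::field^'d::finite^'d) = matrix_scale k (unit_mat x y)"
proof -
  obtain \<zeta> where "\<not> scalar_matrix (mlpoly_eval n c \<zeta> :: 'a^'d^'d)"
    using assms unfolding central_valued_def by blast
  then obtain P P' :: "'a^'d^'d" and x y where P: "P ** P' = mat 1" "P' ** P = mat 1" and "x \<noteq> y"
    and "(P ** mlpoly_eval n c \<zeta> ** P') $ x $ y \<noteq> 0"
    by (rule nonscalar_conj_offdiag)
  then have "mlpoly_eval n c (\<lambda>k. P ** \<zeta> k ** P') $ x $ y \<noteq> 0"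
    by (simp add: mlpoly_eval_conj[OF P])
  then obtain a b where "(mlpoly_eval n c (\<lambda>k. unit_mat (a k) (b k)) :: 'a^'d^'d) $ x $ y \<noteq> 0"
    by (rule mlpoly_eval_entry_on_units)
  with mlpoly_eval_units[OF \<open>x \<noteq> y\<close> this] \<open>x \<noteq> y\<close> show thesis by (intro that) auto
qed

section \<open>Rank-one matrices and transvections\<close>

lemma scalar_product_commute: "scalar_product v (u::'a::comm_semiring_1^'d) = scalar_product u v"
  by (simp add: scalar_product_def mult.commute)

lemma scalar_product_add_left:
  "scalar_product (a + b) (c::'a::semiring_1^'d) = scalar_product a c + scalar_product b c"
  by (simp add: scalar_product_def distrib_right sum.distrib)

lemma scalar_product_add_right:
  "scalar_product c (a + b::'a::semiring_1^'d) = scalar_product c a + scalar_product c b"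
  by (simp add: scalar_product_def distrib_left sum.distrib)

lemma scalar_product_diff_left:
  "scalar_product (a - b) (c::'a::ring_1^'d) = scalar_product a c - scalar_product b c"
  by (simp add: scalar_product_def left_diff_distrib sum_subtractf)

lemma scalar_product_diff_right:
  "scalar_product c (a - b::'a::ring_1^'d) = scalar_product c a - scalar_product c b"
  by (simp add: scalar_product_def right_diff_distrib sum_subtractf)

lemma scalar_product_scale_left:
  "scalar_product (k *s a) (c::'a::semiring_1^'d) = k * scalar_product a c"
  by (simp add: scalar_product_def sum_distrib_left mult.assoc)

lemma scalar_product_scale_right:
  "scalar_product c (k *s a::'a::comm_semiring_1^'d) = k * scalar_product c a"
  by (simp add: scalar_product_def sum_distrib_left mult_ac)

lemmas scalar_product_simps = scalar_product_add_left scalar_product_add_right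
  scalar_product_diff_left scalar_product_diff_right scalar_product_scale_left
  scalar_product_scale_right

lemma scalar_product_zero [simp]: "scalar_product 0 c = 0" "scalar_product c 0 = 0"
  by (simp_all add: scalar_product_def)

lemma axis_component [simp]: "axis i x $ j = (if j = i then x else 0)"
  by (simp add: axis_def)

lemma scalar_product_axis_left [simp]: "scalar_product (axis i 1) (c::'a::semiring_1^'d) = c $ i"
proof -
  have "scalar_product (axis i 1) c = (\<Sum>j\<in>UNIV. if j = i then c $ j else 0)"
    unfolding scalar_product_def by (rule sum.cong) auto
  then show ?thesis by simp
qed

lemma scalar_product_axis_right [simp]: "scalar_product c (axis i 1 :: 'a::semiring_1^'d) = c $ i"
proof -
  have "scalar_product c (axis i 1) = (\<Sum>j\<in>UNIV. if j = i then c $ j else 0)"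
    unfolding scalar_product_def by (rule sum.cong) auto
  then show ?thesis by simp
qed

lemma scalar_product_matrix_vector:
  "scalar_product a (M *v b) = scalar_product (a v* M) (b::'a::comm_semiring_1^'d)"
proof -
  have "scalar_product a (M *v b) = (\<Sum>i\<in>UNIV. \<Sum>j\<in>UNIV. a$i * M$i$j * b$j)"
    by (simp add: scalar_product_def matrix_vector_mult_def sum_distrib_left mult.assoc)
  also have "\<dots> = (\<Sum>j\<in>UNIV. \<Sum>i\<in>UNIV. a$i * M$i$j * b$j)"
    by (rule sum.swap)
  also have "\<dots> = scalar_product (a v* M) b"
    by (simp add: scalar_product_def vector_matrix_mult_def sum_distrib_right)
  finally show ?thesis .
qed

lemma scalar_product_vector_matrix:
  "scalar_product v (u v* M) = scalar_product u (M *v (v::'a::comm_semiring_1^'d))"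
  by (simp add: scalar_product_matrix_vector scalar_product_commute)

lemma nonzero_vector_functional:
  assumes "(v::'a::field^'d) \<noteq> 0"
  obtains w where "scalar_product v w = 1"
proof -
  obtain i where "v $ i \<noteq> 0" using assms by (metis vec_eq_iff zero_index)
  then have "scalar_product v ((1 / v $ i) *s axis i 1) = 1" by (simp add: scalar_product_simps)
  then show thesis by (rule that)
qed

text \<open>Over a general field \<open>scalar_product\<close> may be isotropic; only its nondegeneracy is used.\<close>

lemma separating_functional:
  assumes "\<not> (\<exists>c. x = c *s (u::'a::field^'d))"
  obtains y where "scalar_product y u = 0" "scalar_product y x \<noteq> 0"
proof (cases "u = 0")
  case True
  then obtain i where "x $ i \<noteq> 0" using assms by (metis vec_eq_iff vector_smult_rzero zero_index)
  with True show thesis by (intro that[of "axis i 1"]) simp_all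
next
  case False
  then obtain p where p: "u $ p \<noteq> 0" by (metis vec_eq_iff zero_index)
  obtain q where q: "u $ p * x $ q - u $ q * x $ p \<noteq> 0"
  proof (rule ccontr)
    assume "\<not> thesis"
    with that have eq: "u $ p * x $ q = u $ q * x $ p" for q by auto
    define c where "c = x $ p / u $ p"
    have "x $ q = c * u $ q" for q
    proof -
      have "x $ q = (u $ p * x $ q) / u $ p" using p by simp
      also have "\<dots> = c * u $ q" by (simp add: eq c_def)
      finally show ?thesis .
    qed
    then have "x = c *s u" by (simp add: vec_eq_iff)
    with assms show False by blast
  qed
  show thesis
  proof (rule that[of "u $ p *s axis q 1 - u $ q *s axis p 1"])
    show "scalar_product (u $ p *s axis q 1 - u $ q *s axis p 1) u = 0"
      by (simp add: scalar_product_simps mult.commute)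
    show "scalar_product (u $ p *s axis q 1 - u $ q *s axis p 1) x \<noteq> 0"
      using q by (simp add: scalar_product_simps)
  qed
qed

lemma on_line_if_annihilated:
  assumes "\<And>y. scalar_product y (u::'a::field^'d) = 0 \<Longrightarrow> scalar_product y x = 0"
  shows "\<exists>c. x = c *s u"
  using separating_functional assms by metis

definition outer_prod :: "'a::times^'m \<Rightarrow> 'a^'n \<Rightarrow> 'a^'n^'m" where
  "outer_prod u v = (\<chi> i j. u $ i * v $ j)"

lemma outer_prod_nth [simp]: "outer_prod u v $ i $ j = u $ i * v $ j"
  by (simp add: outer_prod_def)

lemma unit_mat_eq_outer_prod: "unit_mat i j = outer_prod (axis i 1) (axis j (1::'a::semiring_1))"
  by (simp add: vec_eq_iff axis_def)

lemma outer_prod_zero [simp]: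
  "outer_prod 0 v = (0::'a::mult_zero^'n^'m)" "outer_prod u 0 = (0::'a::mult_zero^'n^'m)"
  by (simp_all add: vec_eq_iff)

lemma outer_prod_add_left:
  "outer_prod (a + b) c = outer_prod a c + outer_prod b (c::'a::semiring^'n)"
  by (simp add: vec_eq_iff distrib_right)

lemma outer_prod_add_right:
  "outer_prod c (a + b) = outer_prod c a + outer_prod (c::'a::semiring^'n) b"
  by (simp add: vec_eq_iff distrib_left)

lemma outer_prod_diff_left: "outer_prod (a - b) c = outer_prod a c - outer_prod b (c::'a::ring^'n)"
  by (simp add: vec_eq_iff left_diff_distrib)

lemma outer_prod_diff_right: "outer_prod c (a - b) = outer_prod c a - outer_prod (c::'a::ring^'n) b"
  by (simp add: vec_eq_iff right_diff_distrib)

lemma outer_prod_scale_left: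
  "outer_prod (k *s a) c = matrix_scale k (outer_prod a (c::'a::semigroup_mult^'n))"
  by (simp add: vec_eq_iff mult.assoc)

lemma outer_prod_scale_right:
  "outer_prod c (k *s a) = matrix_scale k (outer_prod c (a::'a::comm_semiring_1^'n))"
  by (simp add: vec_eq_iff mult_ac)

lemma matrix_mult_outer_prod:
  "(M::'a::comm_semiring_1^'d^'e) ** outer_prod a b = outer_prod (M *v a) b"
  by (simp add: vec_eq_iff matrix_matrix_mult_def matrix_vector_mult_def sum_distrib_right mult.assoc)

lemma outer_prod_mult_matrix:
  "outer_prod a b ** (M::'a::comm_semiring_1^'e^'d) = outer_prod a (b v* M)"
  by (simp add: vec_eq_iff matrix_matrix_mult_def vector_matrix_mult_def sum_distrib_left mult.assoc)

lemma outer_prod_mult_outer_prod: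
  "outer_prod a b ** outer_prod c d =
    matrix_scale (scalar_product b c) (outer_prod a (d::'a::comm_semiring_1^'e))"
  by (simp add: outer_prod_mult_matrix vec_eq_iff vector_matrix_mult_def scalar_product_def
      sum_distrib_right sum_distrib_left mult_ac)

lemma outer_prod_mult_vector:
  "outer_prod a b *v c = scalar_product b c *s (a::'a::comm_semiring_1^'d)"
  by (simp add: vec_eq_iff matrix_vector_mult_def scalar_product_def sum_distrib_left mult_ac)

lemma vector_mult_outer_prod:
  "c v* outer_prod a b = scalar_product c a *s (b::'a::comm_semiring_1^'d)"
  by (simp add: vec_eq_iff vector_matrix_mult_def scalar_product_def sum_distrib_right
      sum_distrib_left mult_ac)

lemma matrix_scale_mult_vector: "matrix_scale k A *v c = k *s (A *v (c::'a::comm_semiring_1^'d))"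
  by (simp add: vec_eq_iff matrix_vector_mult_def sum_distrib_left mult_ac)

lemmas outer_prod_simps = matrix_mult_outer_prod outer_prod_mult_matrix vector_mult_outer_prod
  outer_prod_mult_vector outer_prod_scale_left outer_prod_scale_right outer_prod_add_left
  outer_prod_add_right outer_prod_diff_left outer_prod_diff_right matrix_scale_mult_vector

lemma commutator_outer_prod:
  assumes "scalar_product v w = 1" "scalar_product z u = 1"
  shows "outer_prod w z ** outer_prod u v - outer_prod u v ** outer_prod w z =
    outer_prod w v - outer_prod u (z::'a::comm_ring_1^'d)"
  using assms by (simp add: outer_prod_mult_outer_prod)

lemmas rank_one_simps = outer_prod_simps matrix_distrib_simps matrix_vector_mult_add_rdistrib
  matrix_vector_mult_diff_rdistrib scalar_product_simps scalar_product_matrix_vector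

text \<open>Sherman--Morrison for the rank-one perturbation \<open>I + a b\<^sup>T\<close>.\<close>

lemma identity_plus_outer_prod_inverse:
  fixes a b :: "'a::field^'d"
  assumes "t * (1 + scalar_product b a) = 1"
  shows "(mat 1 + outer_prod a b) ** (mat 1 - matrix_scale t (outer_prod a b)) = mat 1"
    and "(mat 1 - matrix_scale t (outer_prod a b)) ** (mat 1 + outer_prod a b) = mat 1"
proof -
  have "x - t * x = t * scalar_product b a * x" for x
  proof -
    have "t * scalar_product b a * x = (t * (1 + scalar_product b a)) * x - t * x"
      by (simp add: algebra_simps)
    also have "\<dots> = x - t * x" using assms by simp
    finally show ?thesis by simp
  qed
  then have "outer_prod a b - matrix_scale t (outer_prod a b)
      - matrix_scale (t * scalar_product b a) (outer_prod a b) = 0"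
    by (simp add: vec_eq_iff)
  then show "(mat 1 + outer_prod a b) ** (mat 1 - matrix_scale t (outer_prod a b)) = mat 1"
    and "(mat 1 - matrix_scale t (outer_prod a b)) ** (mat 1 + outer_prod a b) = mat 1"
    by (simp_all add: matrix_distrib_simps outer_prod_mult_outer_prod algebra_simps)
qed

lemma transvection_inverse:
  fixes a b :: "'a::field^'d"
  assumes "scalar_product b a = 0"
  shows "(mat 1 + outer_prod a b) ** (mat 1 - outer_prod a b) = mat 1"
    and "(mat 1 - outer_prod a b) ** (mat 1 + outer_prod a b) = mat 1"
  using identity_plus_outer_prod_inverse[of 1 b a] assms by simp_all

lemma invertible_identity_plus_outer_prod:
  fixes a b :: "'a::field^'d"
  assumes "1 + scalar_product b a \<noteq> 0"
  shows "invertible (mat 1 + outer_prod a b)"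
  using identity_plus_outer_prod_inverse[of "1 / (1 + scalar_product b a)" b a] assms
  unfolding invertible_def by auto

lemma scalar_product_inverse_pair:
  assumes "T' ** T = (mat 1::'a::field^'d^'d)"
  shows "scalar_product (v v* T') (T *v u) = scalar_product v u"
  by (metis assms scalar_product_matrix_vector matrix_vector_mul_assoc matrix_vector_mul_lid)

lemma vector_matrix_inverse_nonzero:
  assumes "T' ** T = (mat 1::'a::field^'d^'d)" "v \<noteq> 0"
  shows "v v* T' \<noteq> 0"
  by (metis assms vector_matrix_mul_assoc vector_matrix_mul_rid vector_matrix_mult_0)

text \<open>If \<open>P\<close> witnesses \<open>unit_pair_reaches x y u v\<close>, then \<open>P E\<^sub>x\<^sub>y P\<^sup>-\<^sup>1 = (P e\<^sub>x) (e\<^sub>y\<^sup>T P\<^sup>-\<^sup>1)\<close>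
  is a nonzero multiple of \<open>u v\<^sup>T\<close>.\<close>

definition unit_pair_reaches :: "'d \<Rightarrow> 'd \<Rightarrow> 'a::field^'d \<Rightarrow> 'a^'d \<Rightarrow> bool" where
  "unit_pair_reaches x y u v \<longleftrightarrow>
    (\<exists>P k. invertible P \<and> k \<noteq> 0 \<and> P *v axis x 1 = u \<and> v v* P = k *s axis y 1)"

lemma unit_pair_reaches_transfer:
  assumes T: "T ** T' = mat 1" "T' ** T = mat 1"
    and "unit_pair_reaches x y (T *v u) (v v* T')"
  shows "unit_pair_reaches x y u v"
proof -
  obtain P k where P: "invertible P" "k \<noteq> 0" "P *v axis x 1 = T *v u" "(v v* T') v* P = k *s axis y 1"
    using assms(3) unfolding unit_pair_reaches_def by blast
  have "invertible (T' ** P)"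
    using T P(1) by (intro invertible_mult) (auto simp: invertible_def)
  moreover have "(T' ** P) *v axis x 1 = u"
    by (metis P(3) T(2) matrix_vector_mul_assoc matrix_vector_mul_lid)
  moreover have "v v* (T' ** P) = k *s axis y 1"
    by (metis P(4) vector_matrix_mul_assoc)
  ultimately show ?thesis unfolding unit_pair_reaches_def using P(2) by blast
qed

lemma unit_pair_reaches_if_entries_nonzero:
  fixes u v :: "'a::field^'d"
  assumes xy: "x \<noteq> y" and ux: "u $ x \<noteq> 0" and vy: "v $ y \<noteq> 0" and vu: "scalar_product v u = 0"
  shows "unit_pair_reaches x y u v"
proof -
  txt \<open>\<open>P\<^sub>1\<close> replaces column \<open>x\<close> of \<open>I\<close> by \<open>u\<close>; \<open>P\<^sub>2\<close> fixes \<open>e\<^sub>x\<close> and clears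
    all entries of \<open>v\<^sup>T P\<^sub>1\<close> except the \<open>y\<close>-th.\<close>
  define P1 where "P1 = mat 1 + outer_prod (u - axis x 1) (axis x 1)"
  have P1: "invertible P1"
    unfolding P1_def using ux
    by (intro invertible_identity_plus_outer_prod) (simp add: scalar_product_simps)
  have P1x: "P1 *v axis x 1 = u"
    by (simp add: P1_def matrix_vector_mult_add_rdistrib outer_prod_mult_vector)
  define v1 where "v1 = v v* P1"
  have v1: "v1 = v - v $ x *s axis x 1"
    by (simp add: v1_def P1_def vector_matrix_mult_add_rdistrib vector_mult_outer_prod
        scalar_product_simps vu)
  define g where "g = (1 / v $ y) *s (v $ y *s axis y 1 - v1)"
  define P2 where "P2 = mat 1 + outer_prod (axis y 1) g"
  have gx: "g $ x = 0" and gy: "g $ y = 0"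
    using xy vy by (simp_all add: g_def v1)
  have P2: "invertible P2"
    unfolding P2_def using gy by (intro invertible_identity_plus_outer_prod) simp
  have P2x: "P2 *v axis x 1 = axis x 1"
    by (simp add: P2_def matrix_vector_mult_add_rdistrib outer_prod_mult_vector gx)
  have "v1 $ y = v $ y" using xy by (simp add: v1)
  then have "v1 v* P2 = v1 + v $ y *s g"
    by (simp add: P2_def vector_matrix_mult_add_rdistrib vector_mult_outer_prod)
  also have "\<dots> = v $ y *s axis y 1"
    using vy by (simp add: g_def vec_eq_iff field_simps)
  finally have v1P2: "v1 v* P2 = v $ y *s axis y 1" .
  have "invertible (P1 ** P2)" using P1 P2 by (rule invertible_mult)
  moreover have "(P1 ** P2) *v axis x 1 = u"
    by (metis P1x P2x matrix_vector_mul_assoc)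
  moreover have "v v* (P1 ** P2) = v $ y *s axis y 1"
    by (metis v1P2 v1_def vector_matrix_mul_assoc)
  ultimately show ?thesis unfolding unit_pair_reaches_def using vy by blast
qed

lemma unit_pair_reaches_if_entry_nonzero:
  fixes u v :: "'a::field^'d"
  assumes xy: "x \<noteq> y" and ux: "u $ x \<noteq> 0" and v0: "v \<noteq> 0" and vu: "scalar_product v u = 0"
  shows "unit_pair_reaches x y u v"
proof (cases "v $ y = 0")
  case False
  then show ?thesis using unit_pair_reaches_if_entries_nonzero assms by blast
next
  case True
  obtain q where q: "q \<noteq> x" "v $ q \<noteq> 0"
  proof (rule ccontr)
    assume "\<not> thesis"
    with that have "v = v $ x *s axis x 1"
      by (auto simp: vec_eq_iff)
    with vu ux v0 show False
      by (metis mult_eq_0_iff scalar_product_axis_left scalar_product_scale_left vector_smult_lzero)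
  qed
  have qy: "q \<noteq> y" using q True by auto
  define T where "T = mat 1 - outer_prod (axis q 1) (axis y 1 :: 'a^'d)"
  define T' where "T' = mat 1 + outer_prod (axis q 1) (axis y 1 :: 'a^'d)"
  have "scalar_product (axis y 1) (axis q 1 :: 'a^'d) = 0" using qy by simp
  then have T: "T ** T' = mat 1" "T' ** T = mat 1"
    unfolding T_def T'_def by (simp_all add: transvection_inverse)
  have "(T *v u) $ x = u $ x"
    using q(1) by (simp add: T_def matrix_vector_mult_diff_rdistrib outer_prod_mult_vector)
  moreover have "(v v* T') $ y = v $ q"
    using True by (simp add: T'_def vector_matrix_mult_add_rdistrib vector_mult_outer_prod)
  moreover have "scalar_product (v v* T') (T *v u) = 0"
    using scalar_product_inverse_pair[OF T(2)] vu by simp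
  ultimately have "unit_pair_reaches x y (T *v u) (v v* T')"
    using unit_pair_reaches_if_entries_nonzero[OF xy] ux q(2) by metis
  then show ?thesis by (rule unit_pair_reaches_transfer[OF T])
qed

lemma unit_pair_reaches_if_orthogonal:
  fixes u v :: "'a::field^'d"
  assumes xy: "x \<noteq> y" and u0: "u \<noteq> 0" and v0: "v \<noteq> 0" and vu: "scalar_product v u = 0"
  shows "unit_pair_reaches x y u v"
proof (cases "u $ x = 0")
  case False
  then show ?thesis using unit_pair_reaches_if_entry_nonzero assms by blast
next
  case True
  obtain p where p: "u $ p \<noteq> 0" using u0 by (metis vec_eq_iff zero_index)
  have px: "p \<noteq> x" using p True by auto
  define T where "T = mat 1 + outer_prod (axis x 1) (axis p 1 :: 'a^'d)"
  define T' where "T' = mat 1 - outer_prod (axis x 1) (axis p 1 :: 'a^'d)"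
  have "scalar_product (axis p 1) (axis x 1 :: 'a^'d) = 0" using px by simp
  then have T: "T ** T' = mat 1" "T' ** T = mat 1"
    unfolding T_def T'_def by (simp_all add: transvection_inverse)
  have "(T *v u) $ x = u $ p"
    using True by (simp add: T_def matrix_vector_mult_add_rdistrib outer_prod_mult_vector)
  moreover have "v v* T' \<noteq> 0" using vector_matrix_inverse_nonzero[OF T(2) v0] .
  moreover have "scalar_product (v v* T') (T *v u) = 0"
    using scalar_product_inverse_pair[OF T(2)] vu by simp
  ultimately have "unit_pair_reaches x y (T *v u) (v v* T')"
    using unit_pair_reaches_if_entry_nonzero[OF xy] p by metis
  then show ?thesis by (rule unit_pair_reaches_transfer[OF T])
qed

section \<open>A criterion for one of two matrices to be scalar\<close>

lemma matrix_vector_axis: "((M::'a::semiring_1^'d^'e) *v axis t 1) $ r = M $ r $ t"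
proof -
  have "(M *v axis t 1) $ r = (\<Sum>j\<in>UNIV. if j = t then M $ r $ t else 0)"
    unfolding matrix_vector_mult_def vec_lambda_beta by (rule sum.cong) auto
  then show ?thesis by simp
qed

lemma nonscalar_matrix_non_eigenvector:
  assumes "\<not> scalar_matrix (M::'a::field^'d^'d)"
  obtains u where "\<not> (\<exists>c. M *v u = c *s u)"
proof (rule ccontr)
  assume "\<not> thesis"
  with that have eigen: "\<exists>c. M *v u = c *s u" for u by blast
  have off: "M $ r $ t = 0" if "r \<noteq> t" for r t
  proof -
    obtain c where "M *v axis t 1 = c *s axis t 1" using eigen by blast
    then have "(M *v axis t 1) $ r = (c *s axis t 1) $ r" by simp
    with that show ?thesis by (simp add: matrix_vector_axis)
  qed
  have "M $ i $ i = M $ j $ j" for i j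
  proof (cases "i = j")
    case False
    obtain c where c: "M *v (axis i 1 + axis j 1) = c *s (axis i 1 + axis j 1)" using eigen by blast
    have "(M *v (axis i 1 + axis j 1)) $ i = (c *s (axis i 1 + axis j 1)) $ i"
      "(M *v (axis i 1 + axis j 1)) $ j = (c *s (axis i 1 + axis j 1)) $ j" using c by simp_all
    with False off[of i j] off[of j i] show ?thesis
      by (simp add: matrix_vector_right_distrib matrix_vector_axis)
  qed simp
  with off have "M = mat (M $ undefined $ undefined)"
    by (auto simp: vec_eq_iff mat_def)
  with assms show False unfolding scalar_matrix_def by blast
qed

lemma non_eigenvector_sum:
  fixes M :: "'a::field^'d^'d"
  assumes Ma: "M *v a = m *s a + k *s b" and Mb: "M *v b = m *s b" and k: "k \<noteq> 0"
    and na: "\<not> (\<exists>c. M *v a = c *s a)"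
  shows "\<not> (\<exists>c. M *v (a + b) = c *s (a + b))"
proof
  assume "\<exists>c. M *v (a + b) = c *s (a + b)"
  then obtain c where "M *v (a + b) = c *s (a + b)" by blast
  with Ma Mb have eq: "(m - c) *s a = (c - m - k) *s b"
    by (simp add: matrix_vector_right_distrib vec_eq_iff algebra_simps)
  show False
  proof (cases "c - m - k = 0")
    case True
    have "a \<noteq> 0" using na by (metis matrix_vector_mult_0_right vector_smult_rzero)
    with eq True have "m = c" by simp
    with True k show False by simp
  next
    case False
    with eq have "b = ((m - c) / (c - m - k)) *s a"
      by (simp add: vec_eq_iff field_simps)
    with Ma have "M *v a = (m + k * ((m - c) / (c - m - k))) *s a"
      by (simp add: vec_eq_iff algebra_simps)
    with na show False by blast
  qed
qed

context
  fixes X Y :: "'a::field^'d^'d"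
  assumes orth: "\<And>u v y. scalar_product v u = 0 \<Longrightarrow> scalar_product y u = 0 \<Longrightarrow>
      scalar_product v (Y *v u) * scalar_product y (X *v u) = 0"
begin

lemma eigenvector_if_non_eigenvector:
  assumes "\<not> (\<exists>c. Y *v u = c *s u)"
  shows "\<exists>l. X *v u = l *s u"
proof -
  obtain v where "scalar_product v u = 0" "scalar_product v (Y *v u) \<noteq> 0"
    using separating_functional[OF assms] .
  with orth show ?thesis by (metis mult_eq_0_iff on_line_if_annihilated)
qed

context
  assumes polar: "\<And>u v w z. scalar_product v u = 0 \<Longrightarrow> scalar_product z w = 0 \<Longrightarrow>
      scalar_product v w = 1 \<Longrightarrow> scalar_product z u = 1 \<Longrightarrow>
      scalar_product v (X *v u) * (scalar_product v (Y *v w) - scalar_product z (Y *v u)) +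
      scalar_product v (Y *v u) * (scalar_product v (X *v w) - scalar_product z (X *v u)) = 0"
begin

lemma functional_eigenvalue_normalized:
  assumes l: "X *v u = l *s u" and v: "scalar_product v u = 0" "scalar_product v (Y *v u) \<noteq> 0"
    and w: "scalar_product v w = 1"
  shows "scalar_product v (X *v w) = l"
proof -
  have "u \<noteq> 0" using v(2) by auto
  with v(1) w have "\<not> (\<exists>c. u = c *s w)"
    by (auto simp: scalar_product_simps)
  then obtain z' where z': "scalar_product z' w = 0" "scalar_product z' u \<noteq> 0"
    by (rule separating_functional)
  define z where "z = (1 / scalar_product z' u) *s z'"
  have z: "scalar_product z w = 0" "scalar_product z u = 1"
    using z' by (simp_all add: z_def scalar_product_simps)
  have "scalar_product v (X *v u) = 0" "scalar_product z (X *v u) = l"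
    using l v(1) z(2) by (simp_all add: scalar_product_simps)
  with polar[OF v(1) z(1) w z(2)] v(2) show ?thesis by simp
qed

lemma functional_eigenvalue:
  assumes l: "X *v u = l *s u" and v: "scalar_product v u = 0" "scalar_product v (Y *v u) \<noteq> 0"
  shows "scalar_product v (X *v w) = l * scalar_product v w"
proof -
  obtain w0 where w0: "scalar_product v w0 = 1"
    using v(2) by (metis nonzero_vector_functional scalar_product_zero(1))
  have "scalar_product v (w + (1 - scalar_product v w) *s w0) = 1"
    using w0 by (simp add: scalar_product_simps)
  from functional_eigenvalue_normalized[OF l v this]
  have "scalar_product v (X *v w) + (1 - scalar_product v w) * scalar_product v (X *v w0) = l"
    by (simp only: matrix_vector_right_distrib vector_scalar_commute scalar_product_add_right
        scalar_product_scale_right)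
  with functional_eigenvalue_normalized[OF l v w0] show ?thesis by (simp add: algebra_simps)
qed

lemma scalar_plus_rank_one_if_non_eigenvector:
  assumes nY: "\<not> (\<exists>c. Y *v u = c *s u)"
  obtains l where "X *v u = l *s u" and "\<And>w. \<exists>c. X *v w - l *s w = c *s u"
proof -
  obtain l where l: "X *v u = l *s u" using eigenvector_if_non_eigenvector[OF nY] by blast
  obtain v0 where v0: "scalar_product v0 u = 0" "scalar_product v0 (Y *v u) \<noteq> 0"
    using separating_functional[OF nY] .
  have "scalar_product v (X *v w) = l * scalar_product v w" if v: "scalar_product v u = 0" for v w
  proof (cases "scalar_product v (Y *v u) = 0")
    case False
    with l v show ?thesis by (rule functional_eigenvalue)
  next
    case True
    have "scalar_product (v + v0) u = 0" "scalar_product (v + v0) (Y *v u) \<noteq> 0"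
      using v v0 True by (simp_all add: scalar_product_add_left)
    from functional_eigenvalue[OF l this]
    have "scalar_product (v + v0) (X *v w) = l * scalar_product (v + v0) w" .
    with functional_eigenvalue[OF l v0] show ?thesis by (simp add: scalar_product_simps algebra_simps)
  qed
  then have "\<exists>c. X *v w - l *s w = c *s u" for w
    by (intro on_line_if_annihilated) (simp add: scalar_product_simps)
  with l show thesis by (rule that)
qed

end

end

lemma scalar_matrix_either:
  fixes X Y :: "'a::field^'d^'d"
  assumes orth: "\<And>u v y. scalar_product v u = 0 \<Longrightarrow> scalar_product y u = 0 \<Longrightarrow>
      scalar_product v (Y *v u) * scalar_product y (X *v u) = 0"
    and polar: "\<And>u v w z. scalar_product v u = 0 \<Longrightarrow> scalar_product z w = 0 \<Longrightarrow>
      scalar_product v w = 1 \<Longrightarrow> scalar_product z u = 1 \<Longrightarrow>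
      scalar_product v (X *v u) * (scalar_product v (Y *v w) - scalar_product z (Y *v u)) +
      scalar_product v (Y *v u) * (scalar_product v (X *v w) - scalar_product z (X *v u)) = 0"
  shows "scalar_matrix X \<or> scalar_matrix Y"
proof (rule ccontr)
  assume "\<not> ?thesis"
  then obtain u u' where u: "\<not> (\<exists>c. Y *v u = c *s u)" and u': "\<not> (\<exists>c. X *v u' = c *s u')"
    by (meson nonscalar_matrix_non_eigenvector)
  have orth': "scalar_product v (X *v u) * scalar_product y (Y *v u) = 0"
    if "scalar_product v u = 0" "scalar_product y u = 0" for u v y
    using orth[OF that(2) that(1)] by (simp add: mult.commute)
  have polar': "scalar_product v (Y *v u) * (scalar_product v (X *v w) - scalar_product z (X *v u)) +
      scalar_product v (X *v u) * (scalar_product v (Y *v w) - scalar_product z (Y *v u)) = 0"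
    if "scalar_product v u = 0" "scalar_product z w = 0"
      "scalar_product v w = 1" "scalar_product z u = 1" for u v w z
    using polar[OF that] by (simp add: add.commute)
  obtain l where l: "X *v u = l *s u" and lw: "\<And>w. \<exists>c. X *v w - l *s w = c *s u"
    using scalar_plus_rank_one_if_non_eigenvector[OF orth polar u] by blast
  obtain m where m: "Y *v u' = m *s u'" and mw: "\<And>w. \<exists>c. Y *v w - m *s w = c *s u'"
    using scalar_plus_rank_one_if_non_eigenvector[OF orth' polar' u'] by blast
  obtain c1 c2 where "X *v u' - l *s u' = c1 *s u" and "Y *v u - m *s u = c2 *s u'"
    using lw[of u'] mw[of u] by blast
  then have Xu': "X *v u' = l *s u' + c1 *s u" and Yu: "Y *v u = m *s u + c2 *s u'"
    by (simp_all add: diff_eq_eq add.commute)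
  have "c1 \<noteq> 0" "c2 \<noteq> 0" using u u' Xu' Yu by auto
  have "\<not> (\<exists>c. X *v (u + u') = c *s (u + u'))"
    unfolding add.commute[of u u'] using Xu' l \<open>c1 \<noteq> 0\<close> u' by (rule non_eigenvector_sum)
  moreover have "\<not> (\<exists>c. Y *v (u + u') = c *s (u + u'))"
    using Yu m \<open>c2 \<noteq> 0\<close> u by (rule non_eigenvector_sum)
  ultimately show False
    using eigenvector_if_non_eigenvector[OF orth] by blast
qed

section \<open>The identity on square-zero rank-one matrices\<close>

context
  fixes a1 a2 a3 a4 a5 a6 :: "'a::field^'d^'d"
begin

definition quad :: "'a^'d^'d \<Rightarrow> 'a^'d^'d" where
  "quad F = a1 ** F ** F + a2 ** F ** a3 ** F + F ** a5 ** F ** a6 + F ** a4 ** F - a5 ** F ** F ** a6"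

definition polar :: "'a^'d^'d \<Rightarrow> 'a^'d^'d \<Rightarrow> 'a^'d^'d" where
  "polar F G = a1 ** F ** G + a1 ** G ** F + a2 ** F ** a3 ** G + a2 ** G ** a3 ** F
     + F ** a5 ** G ** a6 + G ** a5 ** F ** a6 + F ** a4 ** G + G ** a4 ** F
     - a5 ** F ** G ** a6 - a5 ** G ** F ** a6"

lemma quad_add: "quad (F + G) = quad F + quad G + polar F G"
  unfolding quad_def polar_def by (simp add: matrix_distrib_simps algebra_simps)

lemma quad_scale: "quad (matrix_scale k F) = matrix_scale (k * k) (quad F)"
  unfolding quad_def by (simp add: matrix_distrib_simps)

lemma polar_scale: "polar (matrix_scale k F) (matrix_scale k G) = matrix_scale (k * k) (polar F G)"
  unfolding polar_def by (simp add: matrix_distrib_simps mult.commute)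

lemma polar_sum_right: "polar F (sum g S) = (\<Sum>x\<in>S. polar F (g x))"
proof (induction S rule: infinite_finite_induct)
  case (insert x S)
  have "polar F (g x + sum g S) = polar F (g x) + polar F (sum g S)"
    unfolding polar_def by (simp add: matrix_distrib_simps algebra_simps)
  with insert show ?case by simp
qed (simp_all add: polar_def)

definition ad_stable_root :: "'a^'d^'d \<Rightarrow> bool" where
  "ad_stable_root N \<longleftrightarrow> quad N = 0 \<and> (\<forall>A. polar N (A ** N - N ** A) = 0)"

lemma ad_stable_root_zero: "ad_stable_root 0"
  unfolding ad_stable_root_def quad_def polar_def by simp

lemma ad_stable_root_unscale:
  assumes "ad_stable_root (matrix_scale k N)" "k \<noteq> 0"
  shows "ad_stable_root N"
proof -
  have "A ** matrix_scale k N - matrix_scale k N ** A = matrix_scale k (A ** N - N ** A)" for A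
    by (simp add: matrix_distrib_simps)
  then have "polar (matrix_scale k N) (matrix_scale k (A ** N - N ** A)) = 0" for A
    using assms(1) unfolding ad_stable_root_def by metis
  then show ?thesis
    using assms unfolding ad_stable_root_def by (simp add: polar_scale quad_scale)
qed

text \<open>Linearizing the identity in one variable at a time and summing over the variables
  turns \<open>mlpoly_eval_commutator\<close> into the \<open>polar\<close> condition of \<open>ad_stable_root\<close>.\<close>

lemma ad_stable_root_mlpoly_eval:
  assumes ident: "\<And>\<zeta>. quad (mlpoly_eval n c \<zeta>) = 0"
  shows "ad_stable_root (mlpoly_eval n c \<zeta>)"
proof -
  let ?F = "mlpoly_eval n c \<zeta>"
  have "polar ?F (A ** ?F - ?F ** A) = 0" for A
  proof -
    have "polar ?F (mlpoly_eval n c (\<zeta>(k := A ** \<zeta> k - \<zeta> k ** A))) = 0" if k: "k < n" for k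
    proof -
      let ?G = "mlpoly_eval n c (\<zeta>(k := A ** \<zeta> k - \<zeta> k ** A))"
      have "mlpoly_eval n c (\<zeta>(k := \<zeta> k + (A ** \<zeta> k - \<zeta> k ** A))) = ?F + ?G"
        using mlpoly_eval_update_add[OF k, of c \<zeta> "\<zeta> k"] by simp
      then have "quad (?F + ?G) = 0" by (metis ident)
      with ident show ?thesis by (simp add: quad_add)
    qed
    then have "(\<Sum>k<n. polar ?F (mlpoly_eval n c (\<zeta>(k := A ** \<zeta> k - \<zeta> k ** A)))) = 0" by simp
    then show ?thesis by (simp add: polar_sum_right[symmetric] mlpoly_eval_commutator)
  qed
  with ident show ?thesis unfolding ad_stable_root_def by blast
qed

lemma ad_stable_root_outer_prod:
  assumes ident: "\<And>\<zeta>. quad (mlpoly_eval n c \<zeta>) = 0"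
    and unit: "mlpoly_eval n c \<zeta>0 = (matrix_scale k0 (unit_mat x y) :: 'a^'d^'d)" "x \<noteq> y" "k0 \<noteq> 0"
    and vu: "scalar_product v u = 0"
  shows "ad_stable_root (outer_prod u v)"
proof (cases "u = 0 \<or> v = 0")
  case True
  then show ?thesis using ad_stable_root_zero by auto
next
  case False
  then have "unit_pair_reaches x y u v" using unit(2) vu by (simp add: unit_pair_reaches_if_orthogonal)
  then obtain P k where P: "invertible P" "k \<noteq> 0" "P *v axis x 1 = u" "v v* P = k *s axis y 1"
    unfolding unit_pair_reaches_def by blast
  then obtain P' where P': "P ** P' = mat 1" "P' ** P = mat 1" unfolding invertible_def by blast
  have "axis y 1 v* P' = (1 / k) *s v"
  proof -
    have "v = (v v* P) v* P'" by (metis P'(1) vector_matrix_mul_assoc vector_matrix_mul_rid)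
    then have "v = k *s (axis y 1 v* P')" by (simp add: P(4) scalar_vector_matrix_assoc)
    with P(2) show ?thesis by simp
  qed
  then have "mlpoly_eval n c (\<lambda>i. P ** \<zeta>0 i ** P') = matrix_scale (k0 / k) (outer_prod u v)"
    unfolding mlpoly_eval_conj[OF P'] unit unit_mat_eq_outer_prod
    by (simp add: matrix_distrib_simps outer_prod_simps P(3))
  then have "ad_stable_root (matrix_scale (k0 / k) (outer_prod u v))"
    by (metis ad_stable_root_mlpoly_eval[OF ident])
  then show ?thesis
    by (rule ad_stable_root_unscale) (use P(2) unit(3) in simp)
qed

lemma quad_outer_prod:
  assumes "scalar_product v u = 0"
  shows "quad (outer_prod u v) =
    matrix_scale (scalar_product v (a3 *v u)) (outer_prod (a2 *v u) v)
    + matrix_scale (scalar_product v (a5 *v u)) (outer_prod u (v v* a6))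
    + matrix_scale (scalar_product v (a4 *v u)) (outer_prod u v)"
  unfolding quad_def using assms
  by (simp add: matrix_mult_outer_prod outer_prod_mult_matrix vector_mult_outer_prod
      outer_prod_mult_vector outer_prod_scale_left outer_prod_scale_right matrix_scale_mult_left
      matrix_scale_mult_right matrix_scale_scale scalar_product_matrix_vector)

end

lemma scalar_matrix_transpose: "scalar_matrix (transpose M) \<longleftrightarrow> scalar_matrix M"
  unfolding scalar_matrix_def by (metis transpose_mat transpose_transpose)

context
  fixes a1 a2 a3 a4 a5 a6 :: "'a::field^'d^'d"
  assumes stable: "\<And>u v. scalar_product v u = 0 \<Longrightarrow> ad_stable_root a1 a2 a3 a4 a5 a6 (outer_prod u v)"
begin

lemma quad_outer_prod_zero:
  assumes "scalar_product v u = 0"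
  shows "scalar_product v (a3 *v u) *s (scalar_product v x *s (a2 *v u))
    + scalar_product v (a5 *v u) *s (scalar_product (v v* a6) x *s u)
    + scalar_product v (a4 *v u) *s (scalar_product v x *s u) = 0"
proof -
  have "quad a1 a2 a3 a4 a5 a6 (outer_prod u v) *v x = 0"
    using stable[OF assms] unfolding ad_stable_root_def by simp
  then show ?thesis
    unfolding quad_outer_prod[OF assms]
    by (simp add: matrix_vector_mult_add_rdistrib matrix_scale_mult_vector outer_prod_mult_vector)
qed

lemma orth_condition_a2_a3:
  assumes vu: "scalar_product v u = 0" and yu: "scalar_product y u = 0"
  shows "scalar_product v (a3 *v u) * scalar_product y (a2 *v u) = 0"
proof (cases "v = 0")
  case False
  then obtain x where x: "scalar_product v x = 1" by (rule nonzero_vector_functional)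
  have "scalar_product y (scalar_product v (a3 *v u) *s (scalar_product v x *s (a2 *v u))
      + scalar_product v (a5 *v u) *s (scalar_product (v v* a6) x *s u)
      + scalar_product v (a4 *v u) *s (scalar_product v x *s u)) = 0"
    using quad_outer_prod_zero[OF vu] by simp
  with x yu show ?thesis by (simp add: scalar_product_simps)
qed simp

lemma orth_condition_a5_a6:
  assumes vu: "scalar_product v u = 0" and vx: "scalar_product v x = 0"
  shows "scalar_product v (a5 *v u) * scalar_product v (a6 *v x) = 0"
proof (cases "u = 0")
  case False
  then obtain z where z: "scalar_product u z = 1" by (rule nonzero_vector_functional)
  have "scalar_product z (scalar_product v (a3 *v u) *s (scalar_product v x *s (a2 *v u))
      + scalar_product v (a5 *v u) *s (scalar_product (v v* a6) x *s u)
      + scalar_product v (a4 *v u) *s (scalar_product v x *s u)) = 0"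
    using quad_outer_prod_zero[OF vu] by simp
  with z vx show ?thesis
    by (simp add: scalar_product_simps scalar_product_matrix_vector scalar_product_commute[of z u])
qed simp

lemma polar_condition_a2_a3:
  assumes vu: "scalar_product v u = 0" and zw: "scalar_product z w = 0"
    and vw: "scalar_product v w = 1" and zu: "scalar_product z u = 1"
  shows "scalar_product v (a2 *v u) * (scalar_product v (a3 *v w) - scalar_product z (a3 *v u)) +
    scalar_product v (a3 *v u) * (scalar_product v (a2 *v w) - scalar_product z (a2 *v u)) = 0"
proof -
  let ?N = "outer_prod u v" and ?H = "outer_prod w v - outer_prod u z"
  have "polar a1 a2 a3 a4 a5 a6 ?N ?H = 0" "quad a1 a2 a3 a4 a5 a6 ?N = 0"
    using stable[OF vu] commutator_outer_prod[OF vw zu] unfolding ad_stable_root_def by metis+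
  then have "scalar_product v (polar a1 a2 a3 a4 a5 a6 ?N ?H *v w)
      - scalar_product z (quad a1 a2 a3 a4 a5 a6 ?N *v w) = 0"
    by simp
  then show ?thesis
    unfolding polar_def quad_def using vu zw vw zu by (simp add: rank_one_simps algebra_simps)
qed

lemma polar_condition_a5_a6:
  assumes vu: "scalar_product v u = 0" and zw: "scalar_product z w = 0"
    and vw: "scalar_product v w = 1" and zu: "scalar_product z u = 1"
  shows "scalar_product v (a6 *v u) * (scalar_product v (a5 *v w) - scalar_product z (a5 *v u)) +
    scalar_product v (a5 *v u) * (scalar_product v (a6 *v w) - scalar_product z (a6 *v u)) = 0"
proof -
  let ?N = "outer_prod u v" and ?H = "outer_prod w v - outer_prod u z"
  have "polar a1 a2 a3 a4 a5 a6 ?N ?H = 0" "quad a1 a2 a3 a4 a5 a6 ?N = 0"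
    using stable[OF vu] commutator_outer_prod[OF vw zu] unfolding ad_stable_root_def by metis+
  then have "scalar_product z (polar a1 a2 a3 a4 a5 a6 ?N ?H *v u)
      + scalar_product z (quad a1 a2 a3 a4 a5 a6 ?N *v w) = 0"
    by simp
  then show ?thesis
    unfolding polar_def quad_def using vu zw vw zu by (simp add: rank_one_simps algebra_simps)
qed

lemma scalar_a2_or_a3: "scalar_matrix a2 \<or> scalar_matrix a3"
  using orth_condition_a2_a3 polar_condition_a2_a3 by (rule scalar_matrix_either)

lemma scalar_a5_or_a6: "scalar_matrix a5 \<or> scalar_matrix a6"
proof -
  have "scalar_matrix (transpose a6) \<or> scalar_matrix (transpose a5)"
  proof (rule scalar_matrix_either)
    fix u v y :: "'a^'d"
    assume "scalar_product v u = 0" "scalar_product y u = 0"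
    then show "scalar_product v (transpose a5 *v u) * scalar_product y (transpose a6 *v u) = 0"
      using orth_condition_a5_a6[of u v y]
      by (simp add: scalar_product_vector_matrix scalar_product_commute)
  next
    fix u v w z :: "'a^'d"
    assume "scalar_product v u = 0" "scalar_product z w = 0"
      "scalar_product v w = 1" "scalar_product z u = 1"
    then show "scalar_product v (transpose a6 *v u) *
        (scalar_product v (transpose a5 *v w) - scalar_product z (transpose a5 *v u)) +
      scalar_product v (transpose a5 *v u) *
        (scalar_product v (transpose a6 *v w) - scalar_product z (transpose a6 *v u)) = 0"
      using polar_condition_a5_a6[of u v w z]
      by (simp add: scalar_product_vector_matrix scalar_product_commute algebra_simps)
  qed
  then show ?thesis by (auto simp: scalar_matrix_transpose)
qed

end

theorem lemma2:
  fixes c :: "(nat \<Rightarrow> nat) \<Rightarrow> 'a::field"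
    and n :: nat
    and a1 a2 a3 a4 a5 a6 :: "'a^'d^'d"
  assumes char: "(2::'a) \<noteq> 0"
    and dim: "CARD('d) \<ge> 2"
    and noncentral: "\<not> central_valued n c TYPE('d)"
    and ident: "\<forall>\<zeta> :: nat \<Rightarrow> 'a^'d^'d.
      (let F = mlpoly_eval n c \<zeta> in
        a1 ** F ** F + a2 ** F ** a3 ** F + F ** a5 ** F ** a6 + F ** a4 ** F
          - a5 ** F ** F ** a6 = 0)"
  shows "(scalar_matrix a2 \<and> scalar_matrix a5) \<or> (scalar_matrix a2 \<and> scalar_matrix a6) \<or>
         (scalar_matrix a3 \<and> scalar_matrix a5) \<or> (scalar_matrix a3 \<and> scalar_matrix a6)"
proof -
  have quad_zero: "quad a1 a2 a3 a4 a5 a6 (mlpoly_eval n c \<zeta>) = 0" for \<zeta>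
    using ident by (simp add: quad_def Let_def)
  obtain \<zeta>0 x y k0 where unit: "(mlpoly_eval n c \<zeta>0 :: 'a^'d^'d) = matrix_scale k0 (unit_mat x y)"
    "x \<noteq> y" "k0 \<noteq> 0"
    using noncentral_value_unit_mat[OF noncentral] by metis
  have stable: "ad_stable_root a1 a2 a3 a4 a5 a6 (outer_prod u v)" if "scalar_product v u = 0" for u v
    using quad_zero unit that by (rule ad_stable_root_outer_prod)
  have "scalar_matrix a2 \<or> scalar_matrix a3" using stable by (rule scalar_a2_or_a3)
  moreover have "scalar_matrix a5 \<or> scalar_matrix a6" using stable by (rule scalar_a5_or_a6)
  ultimately show ?thesis by blast
qed

end
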